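(* Let $G$ be a small category and $X$ a set with a partial category action by $G$; let $Y$ with its global action by $G$ be as defined below, and let $i : X\to Y$ be given by $i(x) = [e,x]$ where $e\in{\rm ob}(G)$ is any object with $e\cdot x$ defined. Then $i$ is injective, and for all $y,z\in X$ and $g\in{\rm mor}(G)$: $g\cdot y$ is defined and equal to $z$ if and only if $g\cdot i(y)$ is defined and equal to $i(z)$.
   Context: Conventions: $G$ is a small category; objects are identified with their identity morphisms, so ${\rm ob}(G)\subseteq{\rm mor}(G)$; $d(g), c(g)$ are domain and codomain, $G^2=\{(g,h)\mid d(g)=c(h)\}$. A partial category action by $G$ on $X$ is a partial function ${\rm mor}(G)\times X\to X$, $(g,x)\mapsto g\cdot x$ where defined, such that: (C1) for every $x$ there is $e\in{\rm ob}(G)$ with $e\cdot x$ defined, and whenever $f\in{\rm ob}(G)$ and $f\cdot x$ is defined, $f\cdot x=x$; (C2) if $g\cdot x$ is defined then $d(g)\cdot x$ is defined; (C3) if $(g,h)\in G^2$ and $h\cdot x$ is defined, then $(gh)\cdot x$ is defined iff $g\cdot(h\cdot x)$ is defined, and then they are equal. Let $\overline{X} = \{(g,x)\in{\rm mor}(G)\times X\mid d(g)\cdot x\text{ defined}\}$. Define $(g,x)\sim(g',x')$ on $\overline{X}$ if either (i) there is $h\in{\rm mor}(G)$ with $(g',h)\in G^2$, $h\cdot x$ defined, $g=g'h$ and $x'=h\cdot x$; or (ii) $x=x'$, $g,g'\in{\rm ob}(G)$ and both $g\cdot x$ and $g'\cdot x'$ are defined. Let $\simeq$ be the equivalence relation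 generated by $\sim$, $Y = \overline{X}/\simeq$, and $[g,x]$ the class of $(g,x)$. The action on $Y$: $g\cdot[h,x]$ is defined iff there is $(h',x')\in\overline{X}$ with $(h,x)\simeq(h',x')$ and $(g,h')\in G^2$, and then $g\cdot[h,x]=[gh',x']$. (The map $i$ is well defined, i.e. independent of the choice of $e$.) *)

theory Defs
  imports Main
begin

text \<open>A small category: a set of morphisms, domain/codomain maps, and a composition
  (only meaningful on composable pairs). Objects are identified with identity morphisms.\<close>

record 'm category =
  Mor :: "'m set"
  Dom :: "'m \<Rightarrow> 'm"
  Cod :: "'m \<Rightarrow> 'm"
  Comp :: "'m \<Rightarrow> 'm \<Rightarrow> 'm"

definition Ob :: "('m, 'e) category_scheme \<Rightarrow> 'm set" where
  "Ob G = Dom G ` Mor G"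

definition composable :: "('m, 'e) category_scheme \<Rightarrow> 'm \<Rightarrow> 'm \<Rightarrow> bool" where
  "composable G g h \<longleftrightarrow> g \<in> Mor G \<and> h \<in> Mor G \<and> Dom G g = Cod G h"

definition is_category :: "('m, 'e) category_scheme \<Rightarrow> bool" where
  "is_category G \<longleftrightarrow>
     (\<forall>g\<in>Mor G. Dom G g \<in> Mor G \<and> Cod G g \<in> Mor G) \<and>
     (\<forall>g\<in>Mor G. Dom G (Dom G g) = Dom G g \<and> Cod G (Dom G g) = Dom G g \<and>
                 Dom G (Cod G g) = Cod G g \<and> Cod G (Cod G g) = Cod G g) \<and>
     (\<forall>g h. composable G g h \<longrightarrow> Comp G g h \<in> Mor G \<and>
              Dom G (Comp G g h) = Dom G h \<and> Cod G (Comp G g h) = Cod G g) \<and>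
     (\<forall>f g h. composable G f g \<and> composable G g h \<longrightarrow>
              Comp G (Comp G f g) h = Comp G f (Comp G g h)) \<and>
     (\<forall>g\<in>Mor G. Comp G g (Dom G g) = g \<and> Comp G (Cod G g) g = g)"

definition is_partial_action ::
  "('m, 'e) category_scheme \<Rightarrow> 'x set \<Rightarrow> ('m \<Rightarrow> 'x \<Rightarrow> 'x option) \<Rightarrow> bool" where
  "is_partial_action G X act \<longleftrightarrow>
     (\<forall>g x y. act g x = Some y \<longrightarrow> g \<in> Mor G \<and> x \<in> X \<and> y \<in> X) \<and>
     \<comment> \<open>(C1)\<close>
     (\<forall>x\<in>X. (\<exists>e\<in>Ob G. act e x \<noteq> None) \<and>
              (\<forall>f\<in>Ob G. act f x \<noteq> None \<longrightarrow> act f x = Some x)) \<and>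
     \<comment> \<open>(C2)\<close>
     (\<forall>g x. act g x \<noteq> None \<longrightarrow> act (Dom G g) x \<noteq> None) \<and>
     \<comment> \<open>(C3): (gh).x defined iff g.(h.x) defined, and then equal\<close>
     (\<forall>g h x y. composable G g h \<and> act h x = Some y \<longrightarrow>
              act (Comp G g h) x = act g y)"

definition Xbar ::
  "('m, 'e) category_scheme \<Rightarrow> 'x set \<Rightarrow> ('m \<Rightarrow> 'x \<Rightarrow> 'x option) \<Rightarrow> ('m \<times> 'x) set" where
  "Xbar G X act = {(g, x). g \<in> Mor G \<and> x \<in> X \<and> act (Dom G g) x \<noteq> None}"

definition sim_rel ::
  "('m, 'e) category_scheme \<Rightarrow> 'x set \<Rightarrow> ('m \<Rightarrow> 'x \<Rightarrow> 'x option) \<Rightarrow> (('m \<times> 'x) \<times> ('m \<times> 'x)) set" where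
  "sim_rel G X act = {((g, x), (g', x')).
      (g, x) \<in> Xbar G X act \<and> (g', x') \<in> Xbar G X act \<and>
      ((\<exists>h. composable G g' h \<and> act h x \<noteq> None \<and> g = Comp G g' h \<and> act h x = Some x') \<or>
       (x = x' \<and> g \<in> Ob G \<and> g' \<in> Ob G \<and> act g x \<noteq> None \<and> act g' x' \<noteq> None))}"

definition simeq ::
  "('m, 'e) category_scheme \<Rightarrow> 'x set \<Rightarrow> ('m \<Rightarrow> 'x \<Rightarrow> 'x option) \<Rightarrow> (('m \<times> 'x) \<times> ('m \<times> 'x)) set" where
  "simeq G X act = Id_on (Xbar G X act) \<union> (sim_rel G X act \<union> (sim_rel G X act)\<inverse>)\<^sup>+"

definition Yset ::
  "('m, 'e) category_scheme \<Rightarrow> 'x set \<Rightarrow> ('m \<Rightarrow> 'x \<Rightarrow> 'x option) \<Rightarrow> ('m \<times> 'x) set set" where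
  "Yset G X act = Xbar G X act // simeq G X act"

definition cls ::
  "('m, 'e) category_scheme \<Rightarrow> 'x set \<Rightarrow> ('m \<Rightarrow> 'x \<Rightarrow> 'x option) \<Rightarrow> 'm \<Rightarrow> 'x \<Rightarrow> ('m \<times> 'x) set" where
  "cls G X act g x = simeq G X act `` {(g, x)}"

definition Yact ::
  "('m, 'e) category_scheme \<Rightarrow> 'x set \<Rightarrow> ('m \<Rightarrow> 'x \<Rightarrow> 'x option) \<Rightarrow>
   'm \<Rightarrow> ('m \<times> 'x) set \<Rightarrow> ('m \<times> 'x) set option" where
  "Yact G X act g c =
     (if \<exists>(h', x') \<in> c. composable G g h'
      then Some (let (h', x') = (SOME p. p \<in> c \<and> composable G g (fst p))
                 in cls G X act (Comp G g h') x')
      else None)"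

definition iota ::
  "('m, 'e) category_scheme \<Rightarrow> 'x set \<Rightarrow> ('m \<Rightarrow> 'x \<Rightarrow> 'x option) \<Rightarrow> 'x \<Rightarrow> ('m \<times> 'x) set" where
  "iota G X act x = cls G X act (SOME e. e \<in> Ob G \<and> act e x \<noteq> None) x"

end

theory Submission
  imports Defs
begin

text \<open>The partial map \<open>(g, x) \<mapsto> g\<cdot>x\<close> on \<open>Xbar\<close> is constant on the generating relation,
  hence on its equivalence classes. Conversely a class \<open>[k, w]\<close> with \<open>k\<cdot>w = z\<close> is joined
  to \<open>[cod k, z]\<close> by a single generating step and then to \<open>i(z) = [e, z]\<close>, so
  \<open>[k, w] = i(z)\<close> holds exactly when \<open>k\<cdot>w = z\<close>.
  For the action, every representative \<open>(h', x')\<close> of \<open>i(y)\<close> satisfies \<open>h'\<cdot>x' = y\<close>,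
  so \<open>g\<cdot>i(y) = [gh', x']\<close> has invariant \<open>(gh')\<cdot>x' = g\<cdot>y\<close>; and if \<open>g\<cdot>y\<close> is defined,
  \<open>(dom g, y)\<close> is a representative of \<open>i(y)\<close> composable with \<open>g\<close>.\<close>

locale partial_action =
  fixes G :: "('m, 'e) category_scheme" and X :: "'x set"
    and act :: "'m \<Rightarrow> 'x \<Rightarrow> 'x option"
  assumes partial_action: "is_partial_action G X act"
begin

lemma act_closed: "act g x = Some y \<Longrightarrow> g \<in> Mor G \<and> x \<in> X \<and> y \<in> X"
  using partial_action unfolding is_partial_action_def by blast

lemma ex_Ob_act_defined: "x \<in> X \<Longrightarrow> \<exists>e\<in>Ob G. act e x \<noteq> None"
  using partial_action unfolding is_partial_action_def by blast

lemma act_Ob: "x \<in> X \<Longrightarrow> f \<in> Ob G \<Longrightarrow> act f x \<noteq> None \<Longrightarrow> act f x = Some x"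
  using partial_action unfolding is_partial_action_def by blast

lemma Ob_act_selfE:
  assumes "x \<in> X"
  obtains e where "e \<in> Ob G" "act e x = Some x"
  using ex_Ob_act_defined[OF assms] act_Ob[OF assms] by blast

lemma act_Dom_defined: "act g x \<noteq> None \<Longrightarrow> act (Dom G g) x \<noteq> None"
  using partial_action unfolding is_partial_action_def by blast

lemma act_Comp: "composable G g h \<Longrightarrow> act h x = Some y \<Longrightarrow> act (Comp G g h) x = act g y"
  using partial_action unfolding is_partial_action_def by blast

lemma sim_rel_subset_Xbar: "sim_rel G X act \<subseteq> Xbar G X act \<times> Xbar G X act"
  by (auto simp: sim_rel_def)

lemma sim_rel_subset_simeq: "sim_rel G X act \<subseteq> simeq G X act"
  unfolding simeq_def by auto

lemma equiv_simeq: "equiv (Xbar G X act) (simeq G X act)"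
proof -
  let ?S = "sim_rel G X act \<union> (sim_rel G X act)\<inverse>"
  have "?S \<subseteq> Xbar G X act \<times> Xbar G X act"
    using sim_rel_subset_Xbar by blast
  then have "?S\<^sup>+ \<subseteq> Xbar G X act \<times> Xbar G X act"
    by (rule trancl_subset_Sigma)
  moreover have "sym (?S\<^sup>+)"
    by (rule sym_trancl) (auto simp: sym_def)
  ultimately show ?thesis
    unfolding simeq_def
    by (intro equivI) (auto simp: refl_on_def sym_def trans_def Id_on_def intro: trancl_trans)
qed

lemma simeq_Xbar: "(p, q) \<in> simeq G X act \<Longrightarrow> p \<in> Xbar G X act \<and> q \<in> Xbar G X act"
  using equiv_simeq unfolding equiv_def refl_on_def by blast

lemma simeq_trans: "(p, q) \<in> simeq G X act \<Longrightarrow> (q, r) \<in> simeq G X act \<Longrightarrow> (p, r) \<in> simeq G X act"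
  using equiv_simeq unfolding equiv_def trans_def by blast

lemma cls_eq_iff:
  "(k, w) \<in> Xbar G X act \<Longrightarrow> (k', w') \<in> Xbar G X act \<Longrightarrow>
    cls G X act k w = cls G X act k' w' \<longleftrightarrow> ((k, w), (k', w')) \<in> simeq G X act"
  unfolding cls_def by (rule eq_equiv_class_iff[OF equiv_simeq])

lemma mem_cls_self: "(k, w) \<in> Xbar G X act \<Longrightarrow> (k, w) \<in> cls G X act k w"
  unfolding cls_def by (rule equiv_class_self[OF equiv_simeq])

lemma mem_cls_Xbar: "p \<in> cls G X act k w \<Longrightarrow> p \<in> Xbar G X act"
  using equiv_simeq unfolding cls_def equiv_def refl_on_def by blast

lemma sim_rel_act_eq:
  assumes "(p, q) \<in> sim_rel G X act"
  shows "act (fst p) (snd p) = act (fst q) (snd q)"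
proof -
  obtain k w k' w' where pq: "p = (k, w)" "q = (k', w')"
    by (cases p, cases q)
  have "w \<in> X"
    using assms pq by (simp add: sim_rel_def Xbar_def)
  from assms[unfolded pq sim_rel_def]
  consider h where "composable G k' h" "k = Comp G k' h" "act h w = Some w'"
    | "w = w'" "k \<in> Ob G" "k' \<in> Ob G" "act k w \<noteq> None" "act k' w' \<noteq> None"
    by auto
  then show ?thesis
  proof cases
    case 1
    then show ?thesis using pq act_Comp by simp
  next
    case 2
    then have "act k w = Some w" "act k' w' = Some w"
      using act_Ob[OF \<open>w \<in> X\<close>] by blast+
    then show ?thesis using pq by simp
  qed
qed

lemma simeq_act_eq:
  assumes "(p, q) \<in> simeq G X act"
  shows "act (fst p) (snd p) = act (fst q) (snd q)"
proof -
  have "act (fst p) (snd p) = act (fst q) (snd q)"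
    if "(p, q) \<in> (sim_rel G X act \<union> (sim_rel G X act)\<inverse>)\<^sup>+"
    using that by (induction rule: trancl_induct) (auto dest: sim_rel_act_eq)
  with assms show ?thesis
    unfolding simeq_def by auto
qed

lemma mem_cls_act_eq: "(h, x) \<in> cls G X act k w \<Longrightarrow> act h x = act k w"
  using simeq_act_eq unfolding cls_def by fastforce

lemma Yact_SomeE:
  assumes "Yact G X act g c = Some d"
  obtains h x where "(h, x) \<in> c" "composable G g h" "d = cls G X act (Comp G g h) x"
proof -
  have ex: "\<exists>p. p \<in> c \<and> composable G g (fst p)"
    using assms unfolding Yact_def by (auto split: if_splits)
  obtain h x where hx: "(SOME p. p \<in> c \<and> composable G g (fst p)) = (h, x)"
    by (cases "SOME p. p \<in> c \<and> composable G g (fst p)")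
  with someI_ex[OF ex] have "(h, x) \<in> c" "composable G g h"
    by auto
  moreover have "d = cls G X act (Comp G g h) x"
    using assms hx ex unfolding Yact_def by (auto split: if_splits)
  ultimately show thesis
    using that by blast
qed

lemma Yact_defined: "(h, x) \<in> c \<Longrightarrow> composable G g h \<Longrightarrow> Yact G X act g c \<noteq> None"
  unfolding Yact_def by auto

end

locale partial_category_action = partial_action +
  assumes category: "is_category G"
begin

lemma Ob_in_Mor: "e \<in> Ob G \<Longrightarrow> e \<in> Mor G"
  and Dom_Ob: "e \<in> Ob G \<Longrightarrow> Dom G e = e"
  using category unfolding Ob_def is_category_def by auto

lemma Dom_in_Ob: "g \<in> Mor G \<Longrightarrow> Dom G g \<in> Ob G"
  unfolding Ob_def by blast

lemma Cod_in_Ob: "g \<in> Mor G \<Longrightarrow> Cod G g \<in> Ob G"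
  using category unfolding Ob_def is_category_def by (metis image_eqI)

lemma Comp_Cod: "g \<in> Mor G \<Longrightarrow> Comp G (Cod G g) g = g"
  using category unfolding is_category_def by auto

lemma composable_Dom: "g \<in> Mor G \<Longrightarrow> composable G g (Dom G g)"
  and composable_Cod: "g \<in> Mor G \<Longrightarrow> composable G (Cod G g) g"
  using category unfolding is_category_def composable_def by auto

lemma Comp_in_Mor: "composable G g h \<Longrightarrow> Comp G g h \<in> Mor G"
  and Dom_Comp: "composable G g h \<Longrightarrow> Dom G (Comp G g h) = Dom G h"
  using category unfolding is_category_def by auto

lemma act_Cod: "act g x = Some y \<Longrightarrow> act (Cod G g) y = Some y"
  using act_Comp[OF composable_Cod] Comp_Cod act_closed by metis

lemma Ob_act_in_Xbar:
  assumes "e \<in> Ob G" "act e x = Some y"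
  shows "(e, y) \<in> Xbar G X act"
proof -
  have "x \<in> X"
    using act_closed[OF assms(2)] by blast
  then have "y = x"
    using act_Ob[OF \<open>x \<in> X\<close> assms(1)] assms(2) by simp
  then show ?thesis
    using assms \<open>x \<in> X\<close> Ob_in_Mor Dom_Ob by (simp add: Xbar_def)
qed

lemma iota_eq_cls:
  assumes "x \<in> X" "e \<in> Ob G" "act e x \<noteq> None"
  shows "iota G X act x = cls G X act e x"
proof -
  define e' where "e' = (SOME e. e \<in> Ob G \<and> act e x \<noteq> None)"
  have "\<exists>e. e \<in> Ob G \<and> act e x \<noteq> None"
    using ex_Ob_act_defined[OF \<open>x \<in> X\<close>] by blast
  then have e': "e' \<in> Ob G \<and> act e' x \<noteq> None"
    unfolding e'_def by (rule someI_ex)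
  have "act e' x = Some x" "act e x = Some x"
    using act_Ob[OF \<open>x \<in> X\<close>] e' assms(2,3) by blast+
  then have "((e', x), (e, x)) \<in> sim_rel G X act"
    using e' assms(2) Ob_act_in_Xbar by (simp add: sim_rel_def)
  then have "((e', x), (e, x)) \<in> simeq G X act"
    using sim_rel_subset_simeq by blast
  then show ?thesis
    unfolding iota_def e'_def[symmetric] using cls_eq_iff simeq_Xbar by blast
qed

lemma cls_eq_iota_iff:
  assumes kw_Xbar: "(k, w) \<in> Xbar G X act" and "z \<in> X"
  shows "cls G X act k w = iota G X act z \<longleftrightarrow> act k w = Some z"
proof -
  obtain e where e: "e \<in> Ob G" "act e z = Some z"
    using Ob_act_selfE[OF \<open>z \<in> X\<close>] by blast
  then have iota_z: "iota G X act z = cls G X act e z"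
    using iota_eq_cls \<open>z \<in> X\<close> by simp
  have "((k, w), (e, z)) \<in> simeq G X act" if kw: "act k w = Some z"
  proof -
    have k: "k \<in> Mor G" and cod_k: "Cod G k \<in> Ob G" "act (Cod G k) z = Some z"
      using act_closed[OF kw] Cod_in_Ob act_Cod[OF kw] by auto
    have "\<exists>h. composable G (Cod G k) h \<and> act h w \<noteq> None \<and> k = Comp G (Cod G k) h
        \<and> act h w = Some z"
      using composable_Cod[OF k] Comp_Cod[OF k] kw by (intro exI[of _ k]) simp
    then have "((k, w), (Cod G k, z)) \<in> sim_rel G X act"
      using kw_Xbar Ob_act_in_Xbar[OF cod_k] by (simp add: sim_rel_def)
    moreover have "((Cod G k, z), (e, z)) \<in> sim_rel G X act"
      using e cod_k Ob_act_in_Xbar[OF cod_k] Ob_act_in_Xbar[OF e] by (simp add: sim_rel_def)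
    ultimately show ?thesis
      using sim_rel_subset_simeq simeq_trans by blast
  qed
  moreover have "act k w = Some z" if "((k, w), (e, z)) \<in> simeq G X act"
    using simeq_act_eq[OF that] e by simp
  ultimately show ?thesis
    using iota_z cls_eq_iff[OF kw_Xbar Ob_act_in_Xbar[OF e]] by blast
qed

lemma inj_on_iota: "inj_on (iota G X act) X"
proof (rule inj_onI)
  fix x x' assume "x \<in> X" "x' \<in> X" and eq: "iota G X act x = iota G X act x'"
  obtain e where e: "e \<in> Ob G" "act e x = Some x"
    using Ob_act_selfE[OF \<open>x \<in> X\<close>] by blast
  then have "cls G X act e x = iota G X act x'"
    using eq iota_eq_cls \<open>x \<in> X\<close> by simp
  then show "x = x'"
    using cls_eq_iota_iff[OF Ob_act_in_Xbar[OF e] \<open>x' \<in> X\<close>] e by simp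
qed

lemma Yact_iotaE:
  assumes "y \<in> X" "Yact G X act g (iota G X act y) = Some d"
  obtains k w where "(k, w) \<in> Xbar G X act" "act k w = act g y" "d = cls G X act k w"
proof -
  obtain h x where hx: "(h, x) \<in> iota G X act y" "composable G g h"
    and d: "d = cls G X act (Comp G g h) x"
    using Yact_SomeE[OF assms(2)] by blast
  obtain e where e: "e \<in> Ob G" "act e y = Some y"
    using Ob_act_selfE[OF \<open>y \<in> X\<close>] by blast
  have hx_cls: "(h, x) \<in> cls G X act e y"
    using hx(1) iota_eq_cls[OF \<open>y \<in> X\<close> e(1)] e(2) by simp
  then have "act h x = Some y"
    using mem_cls_act_eq e(2) by simp
  then have "act (Comp G g h) x = act g y"
    using act_Comp hx(2) by simp
  moreover have "(Comp G g h, x) \<in> Xbar G X act"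
    using mem_cls_Xbar[OF hx_cls] Comp_in_Mor[OF hx(2)] Dom_Comp[OF hx(2)]
    by (simp add: Xbar_def)
  ultimately show thesis
    using that d by blast
qed

lemma act_iff_Yact_iota:
  assumes "y \<in> X" "z \<in> X" "g \<in> Mor G"
  shows "act g y = Some z \<longleftrightarrow> Yact G X act g (iota G X act y) = Some (iota G X act z)"
proof
  assume gy: "act g y = Some z"
  have dom_y: "act (Dom G g) y \<noteq> None"
    using act_Dom_defined gy by simp
  have "(Dom G g, y) \<in> Xbar G X act"
    using dom_y \<open>y \<in> X\<close> Ob_in_Mor Dom_Ob Dom_in_Ob[OF \<open>g \<in> Mor G\<close>] by (simp add: Xbar_def)
  then have "(Dom G g, y) \<in> iota G X act y"
    using iota_eq_cls[OF \<open>y \<in> X\<close> Dom_in_Ob[OF \<open>g \<in> Mor G\<close>] dom_y] mem_cls_self by simp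
  then obtain d where "Yact G X act g (iota G X act y) = Some d"
    using Yact_defined composable_Dom[OF \<open>g \<in> Mor G\<close>] by blast
  moreover from Yact_iotaE[OF \<open>y \<in> X\<close> this] have "d = iota G X act z"
    using cls_eq_iota_iff \<open>z \<in> X\<close> gy by metis
  ultimately show "Yact G X act g (iota G X act y) = Some (iota G X act z)"
    by simp
next
  assume "Yact G X act g (iota G X act y) = Some (iota G X act z)"
  from Yact_iotaE[OF \<open>y \<in> X\<close> this] show "act g y = Some z"
    using cls_eq_iota_iff \<open>z \<in> X\<close> by metis
qed

end

theorem mainTheorem9:
  fixes G :: "('m, 'e) category_scheme" and X :: "'x set"
    and act :: "'m \<Rightarrow> 'x \<Rightarrow> 'x option"
  assumes "is_category G"
    and "is_partial_action G X act"
  shows "inj_on (iota G X act) X \<and>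
    (\<forall>y\<in>X. \<forall>z\<in>X. \<forall>g\<in>Mor G.
       act g y = Some z \<longleftrightarrow> Yact G X act g (iota G X act y) = Some (iota G X act z))"
proof -
  interpret partial_category_action G X act
    using assms by unfold_locales
  show ?thesis
    by (intro conjI ballI inj_on_iota act_iff_Yact_iota)
qed

end
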